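(* Let $n\ge 2$, let $u^o=(u^o_1,\dots,u^o_n)\in\mathbb{C}^n$ have pairwise distinct coordinates, let $\{u^o\}=\{u^o_1,\dots,u^o_n\}\subset\mathbb{C}_\lambda$, and let $L^o$ be a local system of finite rank on $\mathbb{C}_\lambda\setminus\{u^o\}$. Let $(M^o,\nabla^o)$ be the regular holonomic $\mathbb{C}[\lambda]\langle\partial_\lambda\rangle$-module corresponding to the intermediate extension $j_*L^o$ under the Riemann–Hilbert correspondence (with $j:\mathbb{C}_\lambda\setminus\{u^o\}\hookrightarrow\mathbb{C}_\lambda$), and let $(G^o,\nabla^o)$ be its localized Laplace transform. Fix a $u^o$-admissible argument $\theta^o$, and let $\Psi^o$, $\mathrm{T}_1,\dots,\mathrm{T}_n$ and the pair of Stokes matrices $(S^o_+,S^o_-)$ of $G^o$ be as described in the context. Then for $i\neq j\in\{1,\dots,n\}$, the blocks $(i,j)$ and $(j,i)$ of both $S^o_+$ and $S^o_-$ vanish if and only if \[ (\mathrm{id}-\mathrm{T}_j)|_{\mathrm{im}(\mathrm{id}-\mathrm{T}_i)}=0\quad\text{and}\quad(\mathrm{id}-\mathrm{T}_i)|_{\mathrm{im}(\mathrm{id}-\mathrm{T}_j)}=0. \]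
   Context: The Laplace transform of a $\mathbb{C}[\lambda]\langle\partial_\lambda\rangle$-module $M$ is the $\mathbb{C}[\zeta]\langle\partial_\zeta\rangle$-module equal to $M$ as a vector space, with $\zeta$ acting as $\partial_\lambda$ and $\partial_\zeta$ acting as $-\lambda$; the localized Laplace transform is its tensor product with $\mathbb{C}[\zeta,\zeta^{-1}]$ over $\mathbb{C}[\zeta]$, viewed as a meromorphic connection in the variable $z=\zeta^{-1}$ (irregular pole at $z=0$). Its formalization over $\mathbb{C}(\!(z)\!)$ decomposes into blocks indexed by $i=1,\dots,n$ (of the form $u^o_i\,\mathrm{id}\,\mathrm{d}(1/z)+C_i\,\mathrm{d}z/z$), and Stokes matrices are decomposed into corresponding blocks $(i,j)$. An argument $\theta^o$ is $u^o$-admissible if, for each $i$, the closed real half-line $\ell_i$ with direction $\theta^o$ starting at $u^o_i$ contains no $u^o_j$, $j\neq i$; set $\ell^o=\bigcup_i\ell_i$ and $\ell_i^*=\ell_i\setminus\{u^o_i\}$. Set $\Psi^o=H^2_c(\mathbb{C}_\lambda\setminus\ell^o,L^o)$ and $\Psi^o_i=H^1_c(\ell_i^*,L^o)$, the latter with monodromy $\mathrm{T}_{ii}$ induced by the monodromy of $L^o$ around $u^o_i$; there are natural isomorphisms $h_i:\Psi^o_i\to\Psi^o$, and $\mathrm{T}_i=h_i\mathrm{T}_{ii}h_i^{-1}$ is the $i$-th monodromy on $\Psi^o$. By a result of Malgrange (in the topological form of D'Agnolo–Hien–Morando–Sabbah), there is a pair $(S^o_+,S^o_-)$ of Stokes matrices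 of $G^o$ (with respect to $\theta^o$), with blocks indexed by $i,j$ where the $i$-th block space is $\phi^o_i=\mathrm{im}(\mathrm{id}-\mathrm{T}_i)\subset\Psi^o$, such that for $i\neq j$ the off-diagonal blocks $(i,j)$ and $(j,i)$ are respectively $\mathrm{c}_j\circ\mathrm{v}_i$ and $0$ for $S^o_+$, and $0$ and $-\mathrm{c}_i\circ\mathrm{v}_j$ for $S^o_-$, where $\mathrm{c}_k=(\mathrm{id}-\mathrm{T}_k):\Psi^o\to\phi^o_k$ and $\mathrm{v}_k:\phi^o_k\hookrightarrow\Psi^o$ is the inclusion. The claim concerns this representative $(S^o_+,S^o_-)$. *)

theory Defs
  imports "Jordan_Normal_Form.Matrix"
begin

text \<open>Linear-algebra skeleton of the Malgrange / DHMS representative of the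
Stokes matrices.  The space Psi is modelled as complex column vectors of
dimension N, the i-th monodromy T i as an N x N complex matrix.\<close>

definition cmap :: "(nat \<Rightarrow> complex mat) \<Rightarrow> nat \<Rightarrow> complex vec \<Rightarrow> complex vec" where
  "cmap T k x = x - T k *\<^sub>v x"

definition phi :: "nat \<Rightarrow> (nat \<Rightarrow> complex mat) \<Rightarrow> nat \<Rightarrow> complex vec set" where
  "phi N T k = cmap T k ` carrier_vec N"

definition vmap :: "complex vec \<Rightarrow> complex vec" where
  "vmap x = x"   \<comment> \<open>inclusion v_k : phi_k \<hookrightarrow> Psi\<close>

text \<open>Block (a,b) of a Stokes matrix is a map phi_a \<rightarrow> phi_b.  The order on the
indices induced by the admissible direction theta is given by a ranking rk:
index a comes before b iff rk a < rk b.  Diagonal blocks are irrelevant here and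
set to the identity.\<close>

definition stokes_plus :: "(nat \<Rightarrow> nat) \<Rightarrow> (nat \<Rightarrow> complex mat) \<Rightarrow> nat \<Rightarrow> nat \<Rightarrow> complex vec \<Rightarrow> complex vec" where
  "stokes_plus rk T a b x =
     (if a = b then x
      else if rk a < rk b then cmap T b (vmap x) else 0\<^sub>v (dim_vec x))"

definition stokes_minus :: "(nat \<Rightarrow> nat) \<Rightarrow> (nat \<Rightarrow> complex mat) \<Rightarrow> nat \<Rightarrow> nat \<Rightarrow> complex vec \<Rightarrow> complex vec" where
  "stokes_minus rk T a b x =
     (if a = b then x
      else if rk b < rk a then - cmap T b (vmap x) else 0\<^sub>v (dim_vec x))"

definition block_vanishes ::
  "nat \<Rightarrow> (nat \<Rightarrow> complex mat) \<Rightarrow> (nat \<Rightarrow> nat \<Rightarrow> complex vec \<Rightarrow> complex vec) \<Rightarrow> nat \<Rightarrow> nat \<Rightarrow> bool" where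
  "block_vanishes N T S a b = (\<forall>x \<in> phi N T a. S a b x = 0\<^sub>v N)"

end

theory Submission
  imports Defs
begin

text \<open>The positive Stokes matrix carries the off-diagonal block
\<open>c\<^sub>b \<circ> v\<^sub>a\<close> only for \<open>a\<close> before \<open>b\<close>, the negative one (up to sign) only for \<open>b\<close>
before \<open>a\<close>.  As the ranking is injective, exactly one of the two orders holds
for \<open>i \<noteq> j\<close>, so the four blocks together vanish precisely when both
restrictions \<open>c\<^sub>j|\<^bsub>\<phi>\<^sub>i\<^esub>\<close> and \<open>c\<^sub>i|\<^bsub>\<phi>\<^sub>j\<^esub>\<close> do.\<close>

lemma cmap_carrier_vec:
  assumes "T k \<in> carrier_mat N N" and "x \<in> carrier_vec N"
  shows "cmap T k x \<in> carrier_vec N"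
  using assms unfolding cmap_def by simp

lemma phi_subset_carrier_vec:
  assumes "T k \<in> carrier_mat N N"
  shows "phi N T k \<subseteq> carrier_vec N"
  using cmap_carrier_vec[of T k N, OF assms] unfolding phi_def by blast

lemma block_vanishes_stokes_plus_iff:
  assumes "a \<noteq> b" and "T a \<in> carrier_mat N N"
  shows "block_vanishes N T (stokes_plus rk T) a b \<longleftrightarrow>
           (rk a < rk b \<longrightarrow> (\<forall>x \<in> phi N T a. cmap T b x = 0\<^sub>v N))"
proof -
  have "stokes_plus rk T a b x = (if rk a < rk b then cmap T b x else 0\<^sub>v N)"
    if "x \<in> phi N T a" for x
    using assms(1) that phi_subset_carrier_vec[of T a N, OF assms(2)]
    unfolding stokes_plus_def vmap_def by auto
  then show ?thesis
    unfolding block_vanishes_def by simp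
qed

lemma block_vanishes_stokes_minus_iff:
  assumes "a \<noteq> b" and "T a \<in> carrier_mat N N" and "T b \<in> carrier_mat N N"
  shows "block_vanishes N T (stokes_minus rk T) a b \<longleftrightarrow>
           (rk b < rk a \<longrightarrow> (\<forall>x \<in> phi N T a. cmap T b x = 0\<^sub>v N))"
proof -
  have "(stokes_minus rk T a b x = 0\<^sub>v N) \<longleftrightarrow> (rk b < rk a \<longrightarrow> cmap T b x = 0\<^sub>v N)"
    if "x \<in> phi N T a" for x
  proof -
    have x: "x \<in> carrier_vec N"
      using that phi_subset_carrier_vec[of T a N, OF assms(2)] by blast
    then have "(- cmap T b x = 0\<^sub>v N) \<longleftrightarrow> (cmap T b x = 0\<^sub>v N)"
      using cmap_carrier_vec[of T b N, OF assms(3)] uminus_zero_vec_eq by blast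
    then show ?thesis
      using assms(1) x unfolding stokes_minus_def vmap_def by auto
  qed
  then show ?thesis
    unfolding block_vanishes_def by simp
qed

theorem corollary1p2:
  fixes n N :: nat and T :: "nat \<Rightarrow> complex mat" and rk :: "nat \<Rightarrow> nat" and i j :: nat
  assumes "n \<ge> 2"
    and "\<forall>k\<in>{1..n}. T k \<in> carrier_mat N N"
    and "inj_on rk {1..n}"
    and "i \<in> {1..n}" and "j \<in> {1..n}" and "i \<noteq> j"
  shows "(block_vanishes N T (stokes_plus rk T) i j \<and> block_vanishes N T (stokes_plus rk T) j i
          \<and> block_vanishes N T (stokes_minus rk T) i j \<and> block_vanishes N T (stokes_minus rk T) j i)
         \<longleftrightarrow> ((\<forall>x \<in> phi N T i. cmap T j x = 0\<^sub>v N) \<and> (\<forall>x \<in> phi N T j. cmap T i x = 0\<^sub>v N))"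
proof -
  have Ti: "T i \<in> carrier_mat N N" and Tj: "T j \<in> carrier_mat N N"
    using assms(2,4,5) by auto
  have "rk i \<noteq> rk j"
    using inj_onD[OF assms(3) _ assms(4,5)] assms(6) by blast
  then show ?thesis
    using block_vanishes_stokes_plus_iff[of i j T N rk] block_vanishes_stokes_plus_iff[of j i T N rk]
      block_vanishes_stokes_minus_iff[of i j T N rk] block_vanishes_stokes_minus_iff[of j i T N rk]
      assms(6) Ti Tj
    by (metis linorder_neqE_nat)
qed

end
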